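(* Let $n\in\mathbb N$. For any $K\in\mathcal S_n\setminus\{\emptyset,\mathbb R^n\}$ we have \[ 2\le\mathrm{diam}(K)+\mathrm{diam}(K^c)\le 2\sqrt2. \] Moreover, if $\mathrm{diam}(K)=d$ then $2-d\le\mathrm{diam}(K^c)\le\sqrt{4-d^2}$.
   Context: $B(x,r)$ is the closed Euclidean ball. For $A\subseteq\mathbb R^n$, $A^c=\bigcap_{x\in A}B(x,1)$. $\mathcal S_n$ is the class of all sets of the form $\bigcap_{x\in A}B(x,1)$, $A\subseteq\mathbb R^n$ (including $\emptyset$ and $\mathbb R^n$). $\mathrm{diam}(A)=\sup\{\|x-y\|_2:x,y\in A\}$. *)

theory Defs
  imports "HOL-Analysis.Analysis"
begin

text \<open>The ball-convex dual: A^c = intersection of closed unit balls centred at points of A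
  (equal to UNIV when A is empty).\<close>
definition ball_dual :: "'a::euclidean_space set \<Rightarrow> 'a set" where
  "ball_dual A = (\<Inter>x\<in>A. cball x 1)"

definition S_class :: "'a::euclidean_space set set" where
  "S_class = range ball_dual"

end

theory Submission
  imports Defs
begin

text \<open>Lower bound: if \<open>diam Q < 1\<close>, the dual \<open>P = Q\<^sup>c\<close> contains the ball of radius
  \<open>1 - diam Q\<close> around every point of \<open>Q\<close>. Pushing its centre away from a point \<open>x \<in> P\<close> shows
  that all of \<open>Q\<close> lies within \<open>\<rho> = diam P + diam Q - 1\<close> of \<open>x\<close>, so \<open>P\<close> is invariant under
  every translation of length \<open>1 - \<rho>\<close>; a bounded nonempty set has no nonzero translation
  invariance, hence \<open>\<rho> \<ge> 1\<close>. Upper bound: every point of \<open>K\<close> is within distance 1 of every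
  point of \<open>K\<^sup>c\<close>, and by Euler's quadrilateral identity two chords \<open>xy\<close> of \<open>K\<close> and \<open>uv\<close> of
  \<open>K\<^sup>c\<close> then satisfy \<open>|x - y|\<^sup>2 + |u - v|\<^sup>2 \<le> 4\<close>, whence \<open>diam\<^sup>2 K + diam\<^sup>2 K\<^sup>c \<le> 4\<close>.\<close>

lemma mem_ball_dual: "x \<in> ball_dual A \<longleftrightarrow> (\<forall>a\<in>A. dist a x \<le> 1)"
  unfolding ball_dual_def by auto

lemma subset_ball_dual_ball_dual: "A \<subseteq> ball_dual (ball_dual A)"
  by (auto simp: mem_ball_dual) (metis dist_commute)

lemma ball_dual_antimono: "A \<subseteq> B \<Longrightarrow> ball_dual B \<subseteq> ball_dual A"
  unfolding ball_dual_def by auto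

lemma S_class_iff: "K \<in> S_class \<longleftrightarrow> ball_dual (ball_dual K) = K"
proof
  assume "K \<in> S_class"
  then obtain A where "K = ball_dual A"
    unfolding S_class_def by blast
  then show "ball_dual (ball_dual K) = K"
    by (simp add: ball_dual_antimono subset_ball_dual_ball_dual subset_antisym)
qed (metis S_class_def rangeI)

lemma ball_dual_empty: "ball_dual {} = UNIV"
  by (simp add: ball_dual_def)

lemma bounded_ball_dual: "a \<in> A \<Longrightarrow> bounded (ball_dual A)"
  unfolding bounded_def by (intro exI[of _ a] exI[of _ 1]) (auto simp: mem_ball_dual)

lemma bounded_translation_invariant_eq_0:
  fixes S :: "'a::real_normed_vector set"
  assumes "bounded S" and "x \<in> S" and invariant: "\<And>y. y \<in> S \<Longrightarrow> y + v \<in> S"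
  shows "v = 0"
proof (rule ccontr)
  assume "v \<noteq> 0"
  have orbit: "x + of_nat k *\<^sub>R v \<in> S" for k
  proof (induction k)
    case (Suc k)
    then show ?case
      using invariant[OF Suc] by (simp add: algebra_simps)
  qed (simp add: \<open>x \<in> S\<close>)
  obtain B where B: "\<And>y. y \<in> S \<Longrightarrow> norm y \<le> B"
    using \<open>bounded S\<close> by (auto simp: bounded_iff)
  obtain k where k: "B + norm x < of_nat k * norm v"
    using ex_less_of_nat_mult[of "norm v" "B + norm x"] \<open>v \<noteq> 0\<close> by auto
  have "of_nat k * norm v \<le> norm (x + of_nat k *\<^sub>R v) + norm x"
    using norm_triangle_ineq4[of "x + of_nat k *\<^sub>R v" x] by simp
  also have "\<dots> \<le> B + norm x"
    using B[OF orbit] by simp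
  finally show False
    using k by simp
qed

lemma cball_subset_ball_dual:
  assumes "bounded Q" and "y \<in> Q"
  shows "cball y (1 - diameter Q) \<subseteq> ball_dual Q"
proof
  fix z assume z: "z \<in> cball y (1 - diameter Q)"
  have "dist w z \<le> 1" if "w \<in> Q" for w
    using dist_triangle[of w z y] diameter_bounded_bound[OF assms(1) that assms(2)] z by simp
  then show "z \<in> ball_dual Q"
    by (simp add: mem_ball_dual)
qed

lemma dist_add_le_diameter_ball_dual:
  fixes Q :: "'a::euclidean_space set"
  assumes "bounded Q" and "diameter Q \<le> 1" and x: "x \<in> ball_dual Q" and y: "y \<in> Q"
  shows "dist x y + (1 - diameter Q) \<le> diameter (ball_dual Q)"
proof -
  obtain u :: 'a where u: "norm u = 1" "x - y = norm (x - y) *\<^sub>R u"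
  proof (cases "x = y")
    case True
    obtain u :: 'a where "norm u = 1"
      using vector_choose_size[of 1] by auto
    then show ?thesis
      using that True by simp
  next
    case False
    then show ?thesis
      using that[of "(x - y) /\<^sub>R norm (x - y)"] by simp
  qed
  define z where "z = y - (1 - diameter Q) *\<^sub>R u"
  have "z \<in> ball_dual Q"
    using cball_subset_ball_dual[OF \<open>bounded Q\<close> y] \<open>diameter Q \<le> 1\<close> u
    by (auto simp: z_def dist_norm)
  have "x - z = (dist x y + (1 - diameter Q)) *\<^sub>R u"
    using u(2) by (simp add: z_def dist_norm algebra_simps)
  then have "dist x z = dist x y + (1 - diameter Q)"
    using \<open>diameter Q \<le> 1\<close> u(1) by (simp add: dist_norm)
  then show ?thesis
    using diameter_bounded_bound[OF bounded_ball_dual[OF y] x \<open>z \<in> ball_dual Q\<close>] y by auto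
qed

lemma diameter_add_diameter_ball_dual_ge_2:
  fixes Q :: "'a::euclidean_space set"
  assumes "bounded Q" and "y \<in> Q" and "diameter Q < 1"
  shows "2 \<le> diameter Q + diameter (ball_dual Q)"
proof (rule ccontr)
  define P where "P = ball_dual Q"
  define \<rho> where "\<rho> = diameter P + diameter Q - 1"
  assume "\<not> ?thesis"
  then have "\<rho> < 1"
    by (simp add: \<rho>_def P_def)
  have "y \<in> P"
    using cball_subset_ball_dual[OF \<open>bounded Q\<close> \<open>y \<in> Q\<close>] \<open>diameter Q < 1\<close>
      diameter_ge_0[OF \<open>bounded Q\<close>] by (auto simp: P_def)
  obtain b :: 'a where b: "norm b = 1"
    using vector_choose_size[of 1] by auto
  have invariant: "x + (1 - \<rho>) *\<^sub>R b \<in> P" if x: "x \<in> P" for x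
  proof -
    have "dist w (x + (1 - \<rho>) *\<^sub>R b) \<le> 1" if w: "w \<in> Q" for w
    proof -
      have "dist w x \<le> \<rho>"
        using dist_add_le_diameter_ball_dual[OF \<open>bounded Q\<close> _ x[unfolded P_def] w]
          \<open>diameter Q < 1\<close> by (simp add: \<rho>_def P_def dist_commute)
      then show ?thesis
        using dist_triangle[of w "x + (1 - \<rho>) *\<^sub>R b" x] b \<open>\<rho> < 1\<close> by (simp add: dist_norm)
    qed
    then show ?thesis
      by (simp add: P_def mem_ball_dual)
  qed
  have "bounded P"
    using bounded_ball_dual[OF \<open>y \<in> Q\<close>] by (simp add: P_def)
  then have "(1 - \<rho>) *\<^sub>R b = 0"
    by (rule bounded_translation_invariant_eq_0[OF _ \<open>y \<in> P\<close> invariant])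
  then show False
    using b \<open>\<rho> < 1\<close> by simp
qed

lemma diameter_add_diameter_ge_2_if_mutually_dual:
  fixes K C :: "'a::euclidean_space set"
  assumes "C = ball_dual K" and "K = ball_dual C" and "k \<in> K" and "c \<in> C"
  shows "2 \<le> diameter K + diameter C"
proof -
  have "bounded K"
    using bounded_ball_dual[OF \<open>c \<in> C\<close>] assms(2) by simp
  have "bounded C"
    using bounded_ball_dual[OF \<open>k \<in> K\<close>] assms(1) by simp
  consider "diameter K < 1" | "diameter C < 1" | "1 \<le> diameter K" "1 \<le> diameter C"
    by linarith
  then show ?thesis
  proof cases
    case 1
    show ?thesis
      using diameter_add_diameter_ball_dual_ge_2[OF \<open>bounded K\<close> \<open>k \<in> K\<close> 1] assms(1) by simp
  next
    case 2
    show ?thesis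
      using diameter_add_diameter_ball_dual_ge_2[OF \<open>bounded C\<close> \<open>c \<in> C\<close> 2] assms(2) by simp
  qed simp
qed

lemma quadrilateral_diagonals_le_sides:
  fixes x y u v :: "'a::real_inner"
  shows "(dist x y)\<^sup>2 + (dist u v)\<^sup>2
    \<le> (dist x u)\<^sup>2 + (dist x v)\<^sup>2 + (dist y u)\<^sup>2 + (dist y v)\<^sup>2"
proof -
  have "(dist x u)\<^sup>2 + (dist x v)\<^sup>2 + (dist y u)\<^sup>2 + (dist y v)\<^sup>2
      = (dist x y)\<^sup>2 + (dist u v)\<^sup>2 + (norm (x + y - u - v))\<^sup>2"
    unfolding dist_norm power2_norm_eq_inner
    by (simp add: inner_diff_left inner_diff_right inner_add_left inner_add_right inner_commute)
  then show ?thesis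
    using zero_le_power2[of "norm (x + y - u - v)"] by linarith
qed

lemma diameter_sq_le:
  fixes S :: "'a::real_normed_vector set"
  assumes "bounded S" and "S \<noteq> {}" and "\<And>x y. x \<in> S \<Longrightarrow> y \<in> S \<Longrightarrow> (dist x y)\<^sup>2 \<le> c"
  shows "(diameter S)\<^sup>2 \<le> c"
proof -
  have "diameter S \<le> sqrt c"
  proof (rule diameter_le)
    show "S \<noteq> {} \<or> 0 \<le> sqrt c"
      using assms(2) by simp
    show "norm (x - y) \<le> sqrt c" if "x \<in> S" "y \<in> S" for x y
      using assms(3)[OF that] by (simp add: dist_norm real_le_rsqrt)
  qed
  then have "(diameter S)\<^sup>2 \<le> (sqrt c)\<^sup>2"
    using diameter_ge_0[OF \<open>bounded S\<close>] by (rule power_mono)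
  moreover obtain x where "x \<in> S"
    using \<open>S \<noteq> {}\<close> by blast
  then have "0 \<le> c"
    using assms(3)[of x x] by simp
  ultimately show ?thesis
    by simp
qed

lemma diameter_sq_add_diameter_sq_le_4:
  fixes P Q :: "'a::real_inner set"
  assumes "bounded P" "P \<noteq> {}" "bounded Q" "Q \<noteq> {}"
    and close: "\<And>x u. x \<in> P \<Longrightarrow> u \<in> Q \<Longrightarrow> dist x u \<le> 1"
  shows "(diameter P)\<^sup>2 + (diameter Q)\<^sup>2 \<le> 4"
proof -
  have chords: "(dist x y)\<^sup>2 + (dist u v)\<^sup>2 \<le> 4" if "x \<in> P" "y \<in> P" "u \<in> Q" "v \<in> Q" for x y u v
  proof -
    have "(dist a b)\<^sup>2 \<le> 1" if "a \<in> P" "b \<in> Q" for a b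
      using close[OF that] by (simp add: power_le_one)
    then have "(dist x u)\<^sup>2 \<le> 1" "(dist x v)\<^sup>2 \<le> 1" "(dist y u)\<^sup>2 \<le> 1" "(dist y v)\<^sup>2 \<le> 1"
      using that by auto
    then show ?thesis
      using quadrilateral_diagonals_le_sides[of x y u v] by linarith
  qed
  have "(diameter P)\<^sup>2 \<le> 4 - (dist u v)\<^sup>2" if "u \<in> Q" "v \<in> Q" for u v
    using chords that by (intro diameter_sq_le[OF \<open>bounded P\<close> \<open>P \<noteq> {}\<close>]) (simp add: algebra_simps)
  then have "(diameter Q)\<^sup>2 \<le> 4 - (diameter P)\<^sup>2"
    by (intro diameter_sq_le[OF \<open>bounded Q\<close> \<open>Q \<noteq> {}\<close>]) (simp add: algebra_simps)
  then show ?thesis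
    by simp
qed

lemma add_le_sqrt_2_mul_if_sum_sq_le:
  fixes a b c :: real
  assumes "a\<^sup>2 + b\<^sup>2 \<le> c\<^sup>2" and "0 \<le> c"
  shows "a + b \<le> sqrt 2 * c"
proof -
  have "(a + b)\<^sup>2 \<le> 2 * (a\<^sup>2 + b\<^sup>2)"
    using sum_squares_bound[of a b] by (simp add: power2_sum)
  also have "\<dots> \<le> (sqrt 2 * c)\<^sup>2"
    using assms(1) by (simp add: power_mult_distrib)
  finally have "\<bar>a + b\<bar> \<le> sqrt 2 * c"
    using assms(2) by (simp add: power2_le_iff_abs_le)
  then show ?thesis
    by simp
qed

theorem theorem3p8:
  fixes K :: "'a::euclidean_space set"
  assumes "K \<in> S_class" and "K \<noteq> {}" and "K \<noteq> UNIV"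
  shows "2 \<le> diameter K + diameter (ball_dual K)
       \<and> diameter K + diameter (ball_dual K) \<le> 2 * sqrt 2
       \<and> 2 - diameter K \<le> diameter (ball_dual K)
       \<and> diameter (ball_dual K) \<le> sqrt (4 - (diameter K)\<^sup>2)"
proof -
  define C where "C = ball_dual K"
  have "K = ball_dual C"
    using assms(1) by (simp add: C_def S_class_iff)
  have "C \<noteq> {}"
    using assms(3) \<open>K = ball_dual C\<close> by (auto simp: ball_dual_empty)
  then obtain k c where "k \<in> K" "c \<in> C"
    using assms(2) by blast
  have "bounded K"
    using bounded_ball_dual[OF \<open>c \<in> C\<close>] \<open>K = ball_dual C\<close> by simp
  have "bounded C"
    using bounded_ball_dual[OF \<open>k \<in> K\<close>] C_def by simp
  have lower: "2 \<le> diameter K + diameter C"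
    by (rule diameter_add_diameter_ge_2_if_mutually_dual[OF C_def \<open>K = ball_dual C\<close> \<open>k \<in> K\<close> \<open>c \<in> C\<close>])
  have sq: "(diameter K)\<^sup>2 + (diameter C)\<^sup>2 \<le> 2\<^sup>2"
    using diameter_sq_add_diameter_sq_le_4[OF \<open>bounded K\<close> \<open>K \<noteq> {}\<close> \<open>bounded C\<close> \<open>C \<noteq> {}\<close>]
    by (simp add: C_def mem_ball_dual)
  have "diameter K + diameter C \<le> 2 * sqrt 2"
    using add_le_sqrt_2_mul_if_sum_sq_le[OF sq] by simp
  moreover have "diameter C \<le> sqrt (4 - (diameter K)\<^sup>2)"
    using sq by (intro real_le_rsqrt) simp
  ultimately show ?thesis
    using lower by (simp add: C_def)
qed

end
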